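(* Let $n\ge 1$, and suppose that for each $j<n$, $\tau^j_0,\tau^j_1,\ldots,\tau^j_{m_j}$ is an $(n+1)$-train. Let $c:[\mathbb{N}]^2\rightarrow\{R,B\}$ be any coloring. Then there is a function $c^*:\bigcup_{j<n}\bigcup_{i\le m_j}\tau^j_i\rightarrow\{R,B\}$ such that for every $j<n$ and $i\le m_j$ and every $\iota\in\{R,B\}$: if $c$ restricted to $[\tau^j_i]^2$ is constantly equal to $\iota$, then there is some $a\in\tau^j_i$ with $c^*(a)=\overline{\iota}$.
   Context: $[X]^2$ denotes the set of unordered $2$-element subsets of $X$. For $\iota\in\{R,B\}$, $\overline{\iota}$ denotes the opposite color: $\overline{R}=B$, $\overline{B}=R$. For $m\ge 1$, an $m$-train is a finite sequence $\tau_0,\tau_1,\ldots,\tau_k$ of pairwise distinct subsets of $\mathbb{N}$, each of size exactly $m$, such that for every $i<k$ and every $a\in\tau_{i+1}\setminus\tau_i$, we have $a>\max\tau_i$ (i.e. $a$ exceeds every element of $\tau_i$). *)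

theory Defs
  imports Main
begin

datatype color = R | B

fun opp :: "color \<Rightarrow> color" where
  "opp R = B" | "opp B = R"

definition train :: "nat \<Rightarrow> nat set list \<Rightarrow> bool" where
  "train m ts \<longleftrightarrow>
     ts \<noteq> [] \<and> distinct ts \<and>
     (\<forall>t\<in>set ts. finite t \<and> card t = m) \<and>
     (\<forall>i. Suc i < length ts \<longrightarrow>
        (\<forall>a \<in> ts ! Suc i - ts ! i. \<forall>b \<in> ts ! i. b < a))"

definition monochromatic :: "(nat set \<Rightarrow> color) \<Rightarrow> nat set \<Rightarrow> color \<Rightarrow> bool" where
  "monochromatic c X \<iota> \<longleftrightarrow> (\<forall>e. e \<subseteq> X \<and> card e = 2 \<longrightarrow> c e = \<iota>)"

end

theory Submission
  imports Defs
begin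

text \<open>Colour each point a by the opposite of the colour of a monochromatic train member
  containing a whose maximum is as large as possible. Suppose a monochromatic set X of colour
  \<open>\<iota>\<close> had no point coloured \<open>opp \<iota>\<close>. By pigeonhole two of its n + 1 points a, b chose members
  \<open>\<tau>\<^sub>i\<close>, \<open>\<tau>\<^sub>k\<close> of the same train, both of a colour other than \<open>\<iota>\<close> and with maxima at least
  max X. As {a, b} has colour \<open>\<iota>\<close>, b \<notin> \<open>\<tau>\<^sub>i\<close> and a \<notin> \<open>\<tau>\<^sub>k\<close>; if, say, i < k, then b entered the
  train after \<open>\<tau>\<^sub>i\<close>, so b > max \<open>\<tau>\<^sub>i\<close> \<ge> max X \<ge> b.\<close>

lemma train_nth_finite_card:
  assumes "train m ts" and "i < length ts"
  shows "finite (ts ! i)" and "card (ts ! i) = m"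
  using assms unfolding train_def by (meson nth_mem)+

lemma train_step_gt:
  assumes "train m ts" and "Suc k < length ts" and "a \<in> ts ! Suc k - ts ! k" and "b \<in> ts ! k"
  shows "b < a"
  using assms unfolding train_def by blast

lemma train_step_new_elem:
  assumes tr: "train m ts" and k: "Suc k < length ts"
  obtains w where "w \<in> ts ! Suc k" and "\<forall>b \<in> ts ! k. b < w"
proof -
  have "ts ! Suc k \<noteq> ts ! k"
    using tr k unfolding train_def by (simp add: nth_eq_iff_index_eq)
  moreover have "finite (ts ! k)" "card (ts ! Suc k) = card (ts ! k)"
    using train_nth_finite_card[OF tr] k by auto
  ultimately have "\<not> ts ! Suc k \<subseteq> ts ! k"
    using card_subset_eq by blast
  then obtain w where "w \<in> ts ! Suc k - ts ! k" by blast
  with train_step_gt[OF tr k] that show ?thesis by blast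
qed

lemma train_elem_le_later:
  assumes "train m ts" and "i \<le> k" and "k < length ts" and "y \<in> ts ! i"
  shows "\<exists>z \<in> ts ! k. y \<le> z"
  using assms(2-)
proof (induction k)
  case (Suc k)
  show ?case
  proof (cases "i = Suc k")
    case False
    then obtain z where "z \<in> ts ! k" "y \<le> z" using Suc by auto
    moreover obtain w where "w \<in> ts ! Suc k" "\<forall>b \<in> ts ! k. b < w"
      using train_step_new_elem[OF assms(1) Suc.prems(2)] .
    ultimately show ?thesis by (meson dual_order.trans less_imp_le)
  qed (use Suc.prems in auto)
qed auto

lemma train_new_elem_gt:
  assumes tr: "train m ts" and "i \<le> k" and "k < length ts"
    and "x \<in> ts ! k - ts ! i" and "y \<in> ts ! i"
  shows "y < x"
  using assms(2-)
proof (induction k)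
  case (Suc k)
  have "i \<noteq> Suc k" using Suc.prems(3) by auto
  with Suc.prems(1) have ik: "i \<le> k" by simp
  show ?case
  proof (cases "x \<in> ts ! k")
    case True
    then show ?thesis using Suc ik by simp
  next
    case False
    obtain z where "z \<in> ts ! k" "y \<le> z"
      using train_elem_le_later[OF tr ik] Suc.prems by auto
    moreover have "z < x"
      using train_step_gt[OF tr] Suc.prems(2,3) False \<open>z \<in> ts ! k\<close> by blast
    ultimately show ?thesis by simp
  qed
qed auto

lemma train_Max_less_new_elem:
  assumes tr: "train m ts" and "i < k" and "k < length ts"
    and "x \<in> ts ! k - ts ! i" and "ts ! i \<noteq> {}"
  shows "Max (ts ! i) < x"
proof -
  have "Max (ts ! i) \<in> ts ! i"
    using train_nth_finite_card(1)[OF tr] assms(2,3,5) by simp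
  then show ?thesis
    using train_new_elem_gt[OF tr less_imp_le[OF assms(2)] assms(3,4)] by blast
qed

lemma monochromatic_colors_eq:
  assumes "monochromatic c X \<iota>" and "monochromatic c Y \<kappa>"
    and "a \<in> X \<inter> Y" and "b \<in> X \<inter> Y" and "a \<noteq> b"
  shows "\<iota> = \<kappa>"
proof -
  have "{a, b} \<subseteq> X" "{a, b} \<subseteq> Y" "card {a, b} = 2" using assms(3-) by auto
  with assms(1,2) show ?thesis unfolding monochromatic_def by metis
qed

lemma train_no_two_witnesses:
  assumes tr: "train m ts" and "i < length ts" and "k < length ts"
    and X: "monochromatic c X \<iota>" "finite X" "a \<in> X" "b \<in> X" "a \<noteq> b"
    and a: "a \<in> ts ! i" "monochromatic c (ts ! i) \<iota>a" "\<iota>a \<noteq> \<iota>" "Max X \<le> Max (ts ! i)"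
    and b: "b \<in> ts ! k" "monochromatic c (ts ! k) \<iota>b" "\<iota>b \<noteq> \<iota>" "Max X \<le> Max (ts ! k)"
  shows False
proof -
  have b_new: "b \<in> ts ! k - ts ! i" and a_new: "a \<in> ts ! i - ts ! k"
    using monochromatic_colors_eq X a b by blast+
  have "a \<le> Max X" "b \<le> Max X" using X by auto
  consider "i < k" | "k < i" using b_new by (cases i k rule: linorder_cases) auto
  then show False
  proof cases
    case 1
    then have "Max (ts ! i) < b" using train_Max_less_new_elem[OF tr _ _ b_new] assms(3) a(1) by blast
    then show False using \<open>b \<le> Max X\<close> a(4) by simp
  next
    case 2
    then have "Max (ts ! k) < a" using train_Max_less_new_elem[OF tr _ _ a_new] assms(2) b(1) by blast
    then show False using \<open>a \<le> Max X\<close> b(4) by simp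
  qed
qed

lemma arg_max_finite_nat:
  fixes f :: "'a \<Rightarrow> nat"
  assumes "finite S" and "x \<in> S"
  shows "arg_max f (\<lambda>y. y \<in> S) \<in> S" and "f x \<le> f (arg_max f (\<lambda>y. y \<in> S))"
proof -
  have "\<forall>y. y \<in> S \<longrightarrow> f y < Suc (Max (f ` S))"
    using assms(1) by (simp add: le_imp_less_Suc)
  then show "arg_max f (\<lambda>y. y \<in> S) \<in> S" "f x \<le> f (arg_max f (\<lambda>y. y \<in> S))"
    using arg_max_nat_lemma[of "\<lambda>y. y \<in> S" x f] assms(2) by auto
qed

lemma ex_witness_of_same_color:
  assumes trains: "\<forall>j<n. train (n + 1) (T j)"
    and X: "monochromatic c X \<iota>" "finite X" "card X = n + 1"
    and witness: "\<And>a. a \<in> X \<Longrightarrow> J a < n \<and> I a < length (T (J a)) \<and> a \<in> T (J a) ! I a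
      \<and> monochromatic c (T (J a) ! I a) (\<kappa> a) \<and> Max X \<le> Max (T (J a) ! I a)"
  shows "\<exists>a \<in> X. \<kappa> a = \<iota>"
proof (rule ccontr)
  assume "\<not> ?thesis"
  then have other: "\<kappa> a \<noteq> \<iota>" if "a \<in> X" for a
    using that by blast
  have "J ` X \<subseteq> {..<n}"
    using witness by auto
  then have "card (J ` X) \<le> n"
    using card_mono[OF finite_lessThan] by fastforce
  then have "\<not> inj_on J X"
    using X(3) by (intro pigeonhole) simp
  then obtain a b where ab: "a \<in> X" "b \<in> X" "a \<noteq> b" "J a = J b"
    unfolding inj_on_def by blast
  note wa = witness[OF ab(1)] and wb = witness[OF ab(2), folded ab(4)]
  then have "train (n + 1) (T (J a))"
    using trains by blast
  from train_no_two_witnesses[OF this _ _ X(1,2) ab(1-3), of "I a" "I b" "\<kappa> a" "\<kappa> b"]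
  show False
    using wa wb other ab by blast
qed

theorem mainTheorem1:
  fixes n :: nat and T :: "nat \<Rightarrow> nat set list" and c :: "nat set \<Rightarrow> color"
  assumes "n \<ge> 1"
    and "\<forall>j<n. train (n + 1) (T j)"
  shows "\<exists>cstar :: nat \<Rightarrow> color. \<forall>j<n. \<forall>i<length (T j). \<forall>\<iota>.
           monochromatic c (T j ! i) \<iota> \<longrightarrow> (\<exists>a \<in> T j ! i. cstar a = opp \<iota>)"
proof -
  define W where
    "W a = {(j, i, \<iota>). j < n \<and> i < length (T j) \<and> monochromatic c (T j ! i) \<iota> \<and> a \<in> T j ! i}" for a
  define w where "w a = arg_max (\<lambda>(j, i, \<iota>). Max (T j ! i)) (\<lambda>k. k \<in> W a)" for a
  define J I \<kappa> where "J a = fst (w a)" and "I a = fst (snd (w a))" and "\<kappa> a = snd (snd (w a))" for a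
  have w_eq: "w a = (J a, I a, \<kappa> a)" for a
    by (simp add: J_def I_def \<kappa>_def)
  have "W a \<subseteq> {..<n} \<times> (\<Union>j<n. {..<length (T j)}) \<times> {R, B}" for a
    unfolding W_def using color.exhaust by auto
  then have "finite (W a)" for a
    by (rule finite_subset) auto
  from arg_max_finite_nat[OF this, where f = "\<lambda>(j, i, \<iota>). Max (T j ! i)"]
  have w: "(J a, I a, \<kappa> a) \<in> W a" "Max (T j ! i) \<le> Max (T (J a) ! I a)" if "(j, i, \<iota>) \<in> W a" for a j i \<iota>
    using that unfolding w_def[symmetric] w_eq by auto
  show ?thesis
  proof (intro exI[of _ "\<lambda>a. opp (\<kappa> a)"] allI impI)
    fix j i \<iota> assume j: "j < n" and i: "i < length (T j)" and X: "monochromatic c (T j ! i) \<iota>"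
    have "\<exists>a \<in> T j ! i. \<kappa> a = \<iota>"
    proof (rule ex_witness_of_same_color[OF assms(2) X])
      show "finite (T j ! i)" "card (T j ! i) = n + 1"
        using train_nth_finite_card assms(2) j i by blast+
      show "J a < n \<and> I a < length (T (J a)) \<and> a \<in> T (J a) ! I a
        \<and> monochromatic c (T (J a) ! I a) (\<kappa> a) \<and> Max (T j ! i) \<le> Max (T (J a) ! I a)"
        if "a \<in> T j ! i" for a
        using w[of j i \<iota> a] j i X that unfolding W_def by simp
    qed
    then show "\<exists>a \<in> T j ! i. opp (\<kappa> a) = opp \<iota>"
      by auto
  qed
qed

end
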